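(* Let $A$ and $B$ be commutative groups. Then $B^A$ is a faithful $\mathbb{Z}_{e(B)}[A]$-module.
   Context: For commutative groups $A,B$, $B^A$ denotes the commutative group (under pointwise addition) of all maps $A\to B$. $\mathbb{Z}_n=\mathbb{Z}/n\mathbb{Z}$ ($\mathbb{Z}_0=\mathbb{Z}$); $e(B)=\exp(B)$ if $B$ has finite exponent and $e(B)=0$ otherwise. The module structure is $(\sum_a n_a[a])f=\sum_a n_a\tau_af$, where $(\tau_af)(x)=f(x+a)$. *)

theory Defs
  imports Main
begin

definition zsmult :: "int \<Rightarrow> 'b::ab_group_add \<Rightarrow> 'b" where
  "zsmult k x = (if 0 \<le> k then (\<Sum>_<nat k. x) else - (\<Sum>_<nat (- k). x))"

definition grp_exp :: "'b::ab_group_add itself \<Rightarrow> nat" where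
  "grp_exp _ = (if \<exists>n>0. \<forall>x::'b. zsmult (int n) x = 0
                then (LEAST n. n > 0 \<and> (\<forall>x::'b. zsmult (int n) x = 0)) else 0)"

text \<open>Elements of the group ring Z[A] are finitely supported maps A \<Rightarrow> int;
  the action on B^A: (\<Sum>_a n_a [a]) f = \<Sum>_a n_a \<tau>_a f, with (\<tau>_a f)(x) = f(x+a).\<close>
definition fin_supp :: "('a \<Rightarrow> int) \<Rightarrow> bool" where
  "fin_supp n \<longleftrightarrow> finite {a. n a \<noteq> 0}"

definition gr_act :: "('a::ab_group_add \<Rightarrow> int) \<Rightarrow> ('a \<Rightarrow> 'b::ab_group_add) \<Rightarrow> ('a \<Rightarrow> 'b)" where
  "gr_act n f = (\<lambda>x. \<Sum>a\<in>{a. n a \<noteq> 0}. zsmult (n a) (f (x + a)))"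

end

theory Submission
  imports Defs
begin

text \<open>For \<open>b \<in> B\<close> let \<open>\<delta>\<^sub>b\<close> be the map that is \<open>b\<close> at \<open>0\<close> and \<open>0\<close> elsewhere. Evaluating
  \<open>(\<Sum>\<^sub>a n\<^sub>a [a]) \<delta>\<^sub>b\<close> at \<open>-a\<close> gives \<open>n\<^sub>a b\<close>, so \<open>\<Sum>\<^sub>a n\<^sub>a [a]\<close> annihilates \<open>B\<^sup>A\<close> exactly when
  every coefficient \<open>n\<^sub>a\<close> annihilates \<open>B\<close>. An integer annihilates \<open>B\<close> exactly when it is a
  multiple of \<open>e(B)\<close>: the annihilating naturals are closed under addition and under
  reduction modulo any of their members, so they are the multiples of the least positive
  one, if there is any.\<close>

lemma sum_const_add:
  "(\<Sum>_<m + k::nat. x) = (\<Sum>_<m. x) + (\<Sum>_<k. (x::'b::ab_group_add))"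
  by (induction k) (simp_all add: add.assoc)

lemma sum_const_mult_annihilates:
  assumes "\<forall>x::'b::ab_group_add. (\<Sum>_<e::nat. x) = 0"
  shows "(\<Sum>_<e * k. (x::'b)) = 0"
  by (induction k) (simp_all add: sum_const_add assms)

lemma zsmult_of_nat: "zsmult (int m) x = (\<Sum>_<m. x)"
  by (simp add: zsmult_def)

lemma zsmult_annihilates_iff_abs:
  "(\<forall>x::'b::ab_group_add. zsmult k x = 0) \<longleftrightarrow> (\<forall>x::'b. (\<Sum>_<nat \<bar>k\<bar>. x) = 0)"
  by (cases "0 \<le> k") (auto simp: zsmult_def)

lemma sum_const_annihilates_iff_exp_dvd:
  "(\<forall>x::'b::ab_group_add. (\<Sum>_<m::nat. x) = 0) \<longleftrightarrow> grp_exp TYPE('b) dvd m"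
proof (cases "\<exists>n::nat>0. \<forall>x::'b. (\<Sum>_<n. x) = 0")
  case True
  define e :: nat where "e = (LEAST n. n > 0 \<and> (\<forall>x::'b. (\<Sum>_<n. x) = 0))"
  have exp_eq: "grp_exp TYPE('b) = e"
    unfolding grp_exp_def zsmult_of_nat e_def by (simp only: if_P[OF True])
  have e: "e > 0" "\<forall>x::'b. (\<Sum>_<e. x) = 0"
    using LeastI_ex[OF True] by (simp_all add: e_def)
  have e_least: "e \<le> m" if "0 < m" "\<forall>x::'b. (\<Sum>_<m. x) = 0" for m
    unfolding e_def by (rule Least_le) (use that in simp)
  show ?thesis unfolding exp_eq
  proof
    assume m: "\<forall>x::'b. (\<Sum>_<m. x) = 0"
    have "\<forall>x::'b. (\<Sum>_<m mod e. x) = 0"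
    proof
      fix x :: 'b
      have "(\<Sum>_<m. x) = (\<Sum>_<m mod e. x) + (\<Sum>_<e * (m div e). x)"
        by (simp flip: sum_const_add)
      then show "(\<Sum>_<m mod e. x) = 0"
        using m sum_const_mult_annihilates[OF e(2)] by simp
    qed
    moreover have "m mod e < e" using e(1) by simp
    ultimately have "m mod e = 0" using e_least by (meson leD neq0_conv)
    then show "e dvd m" by (simp add: mod_eq_0_iff_dvd)
  next
    assume "e dvd m"
    then show "\<forall>x::'b. (\<Sum>_<m. x) = 0"
      using sum_const_mult_annihilates[OF e(2)] by blast
  qed
next
  case False
  then have "grp_exp TYPE('b) = 0"
    unfolding grp_exp_def zsmult_of_nat by (simp only: if_not_P if_False)
  then show ?thesis using False by auto
qed

lemma zsmult_annihilates_iff_exp_dvd: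
  "(\<forall>x::'b::ab_group_add. zsmult k x = 0) \<longleftrightarrow> int (grp_exp TYPE('b)) dvd k"
proof -
  have "int (grp_exp TYPE('b)) dvd k \<longleftrightarrow> grp_exp TYPE('b) dvd nat \<bar>k\<bar>"
    by (metis dvd_abs_iff int_dvd_int_iff abs_ge_zero int_nat_eq)
  then show ?thesis
    by (simp add: zsmult_annihilates_iff_abs sum_const_annihilates_iff_exp_dvd)
qed

lemma gr_act_point_mass:
  assumes "fin_supp n"
  shows "gr_act n (\<lambda>x. if x = 0 then b else 0) (- a) = zsmult (n a) b"
proof -
  have "gr_act n (\<lambda>x. if x = 0 then b else 0) (- a)
          = (\<Sum>c\<in>{c. n c \<noteq> 0}. if c = a then zsmult (n c) b else 0)"
    unfolding gr_act_def by (rule sum.cong) (auto simp: add.commute eq_neg_iff_add_eq_0 zsmult_def)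
  also have "\<dots> = zsmult (n a) b"
    using assms by (simp add: fin_supp_def zsmult_def)
  finally show ?thesis .
qed

lemma gr_act_eq_zero_if_annihilating:
  assumes "\<And>a x. zsmult (n a) (x::'b::ab_group_add) = 0"
  shows "gr_act n (f :: 'a::ab_group_add \<Rightarrow> 'b) = (\<lambda>_. 0)"
  by (simp add: gr_act_def assms)

theorem lemma3p1:
  fixes n :: "'a::ab_group_add \<Rightarrow> int"
  assumes "fin_supp n"
  shows "(\<forall>f :: 'a \<Rightarrow> 'b::ab_group_add. gr_act n f = (\<lambda>_. 0))
           \<longleftrightarrow> (\<forall>a. int (grp_exp TYPE('b)) dvd n a)"
proof
  assume "\<forall>f :: 'a \<Rightarrow> 'b. gr_act n f = (\<lambda>_. 0)"
  then have "\<forall>x::'b. zsmult (n a) x = 0" for a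
    using gr_act_point_mass[OF assms, of _ a] by (metis (no_types))
  then show "\<forall>a. int (grp_exp TYPE('b)) dvd n a"
    by (simp add: zsmult_annihilates_iff_exp_dvd)
next
  assume "\<forall>a. int (grp_exp TYPE('b)) dvd n a"
  then show "\<forall>f :: 'a \<Rightarrow> 'b. gr_act n f = (\<lambda>_. 0)"
    by (metis gr_act_eq_zero_if_annihilating zsmult_annihilates_iff_exp_dvd)
qed

end
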